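(* Let $T_n\in(c_0)^*$ be given by $T_nx=x_n$ for $x=(x_k)_{k\ge1}\in c_0$. Then for all $N\ge2$, $\Big(\frac{N}{2\log(2N)}\Big)^{1/2}\le\mathcal{R}^\gamma(\{T_n:1\le n\le N\})\le4\Big(\frac{N}{\log N}\Big)^{1/2}.$
   Context: $c_0$ is the space of real null sequences with the sup norm. $(\gamma_n)$ are independent standard Gaussians. For $\mathscr{T}\subseteq\mathcal{L}(X,Y)$, the $\gamma$-bound $\mathcal{R}^\gamma(\mathscr{T})$ is the least $C$ such that $(\mathbb{E}\|\sum_{j=1}^J\gamma_jS_jx_j\|^2)^{1/2}\le C(\mathbb{E}\|\sum_{j=1}^J\gamma_jx_j\|^2)^{1/2}$ for all $J$, all $S_1,\dots,S_J\in\mathscr{T}$ (not necessarily distinct) and all $x_1,\dots,x_J\in X$. *)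

theory Defs
  imports "HOL-Probability.Probability"
begin

definition c0 :: "(nat \<Rightarrow> real) set" where
  "c0 = {x. x \<longlonglongrightarrow> 0}"

definition c0_norm :: "(nat \<Rightarrow> real) \<Rightarrow> real" where
  "c0_norm x = (SUP k. \<bar>x k\<bar>)"

definition gauss_measure :: "nat \<Rightarrow> (nat \<Rightarrow> real) measure" where
  "gauss_measure J = (\<Pi>\<^sub>M j\<in>{..<J}. density lborel (\<lambda>t. ennreal (std_normal_density t)))"

definition gauss_sq_c0 :: "nat \<Rightarrow> (nat \<Rightarrow> nat \<Rightarrow> real) \<Rightarrow> real" where
  "gauss_sq_c0 J x = (\<integral>\<omega>. (c0_norm (\<lambda>k. \<Sum>j<J. \<omega> j * x j k))\<^sup>2 \<partial>gauss_measure J)"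

definition gauss_sq_real :: "nat \<Rightarrow> (nat \<Rightarrow> real) \<Rightarrow> real" where
  "gauss_sq_real J y = (\<integral>\<omega>. \<bar>\<Sum>j<J. \<omega> j * y j\<bar>\<^sup>2 \<partial>gauss_measure J)"

definition gamma_bound :: "((nat \<Rightarrow> real) \<Rightarrow> real) set \<Rightarrow> real" where
  "gamma_bound \<T> = Inf {C. \<forall>J (S :: nat \<Rightarrow> (nat \<Rightarrow> real) \<Rightarrow> real) (x :: nat \<Rightarrow> nat \<Rightarrow> real).
      (\<forall>j<J. S j \<in> \<T>) \<longrightarrow> (\<forall>j<J. x j \<in> c0) \<longrightarrow>
      sqrt (gauss_sq_real J (\<lambda>j. S j (x j))) \<le> C * sqrt (gauss_sq_c0 J x)}"

definition coord :: "nat \<Rightarrow> (nat \<Rightarrow> real) \<Rightarrow> real" where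
  "coord n = (\<lambda>x. x n)"

end

theory Submission
  imports Defs "HOL-Real_Asymp.Real_Asymp"
begin

(*
  With g_j independent standard
  Gaussians, C is admissible iff sum_j x_j(n_j)^2 <= C^2 E||sum_j g_j x_j||^2 for all choices
  of n_j in {1..N} and x_j in c0 (lemma gamma_admissible_coordI).

  Lower bound: for x_j = e_(j+1) the left side is N, while E max_(j<N) g_j^2 <= 2 log (2N)
  via the Gaussian tail estimate E (g^2 - s^2)^+ <= 4 phi(s)/s at s = sqrt (2 log N).

  Upper bound: group the j into blocks by the value of n_j; the block sums Z_m are independent
  centred normals.  Averaging over sign flips constant on blocks shows that each Z_m^2 is
  dominated by a variable of mean M = E||sum_j g_j x_j||^2.  A second moment argument on the
  number of blocks with |Z_m| > sqrt (log N / 2) sd(Z_m) then shows that fewer than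
  8N / log N blocks have variance >= 8M / log N, whence sum_j x_j(n_j)^2 <= 16 N M / log N.
*)

section \<open>The joint law of finitely many independent standard Gaussians\<close>

lemma prob_space_std_normal [simp]: "prob_space std_normal_distribution"
  using real_dist_normal_dist real_distribution_def by blast

lemma prob_space_gauss_measure: "prob_space (gauss_measure J)"
  unfolding gauss_measure_def by (intro prob_space_PiM) auto

lemma sets_gauss_measure [measurable_cong]:
  "sets (gauss_measure J) = sets (PiM {..<J} (\<lambda>_. borel))"
  unfolding gauss_measure_def by (intro sets_PiM_cong) auto

lemma space_gauss_measure: "space (gauss_measure J) = ({..<J} \<rightarrow>\<^sub>E UNIV)"
  unfolding gauss_measure_def by (simp add: space_PiM)

lemma gauss_coord_distr:
  assumes "j < J"
  shows "distr (gauss_measure J) borel (\<lambda>\<omega>. \<omega> j) = std_normal_distribution"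
proof -
  have "distr (gauss_measure J) borel (\<lambda>\<omega>. \<omega> j)
      = distr (gauss_measure J) std_normal_distribution (\<lambda>\<omega>. \<omega> j)"
    by (rule distr_cong) auto
  also have "\<dots> = std_normal_distribution"
    unfolding gauss_measure_def using assms by (intro distr_PiM_component) auto
  finally show ?thesis .
qed

lemma gauss_coord_distributed:
  assumes "j < J"
  shows "distributed (gauss_measure J) lborel (\<lambda>\<omega>. \<omega> j) std_normal_density"
proof -
  have "distr (gauss_measure J) lborel (\<lambda>\<omega>. \<omega> j) = distr (gauss_measure J) borel (\<lambda>\<omega>. \<omega> j)"
    by (rule distr_cong) auto
  then show ?thesis
    unfolding distributed_def using gauss_coord_distr[OF assms] assms by auto
qed

lemma gauss_coords_indep:
  "prob_space.indep_vars (gauss_measure J) (\<lambda>_. borel) (\<lambda>j \<omega>. \<omega> j) {..<J}"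
proof -
  interpret P: prob_space "gauss_measure J" by (rule prob_space_gauss_measure)
  show ?thesis
  proof (cases "J = 0")
    case True
    then show ?thesis unfolding P.indep_vars_def P.indep_sets_def by auto
  next
    case False
    have restrict_id:
      "distr (gauss_measure J) (PiM {..<J} (\<lambda>_. borel)) (\<lambda>x. \<lambda>i\<in>{..<J}. x i) = gauss_measure J"
    proof -
      have "distr (gauss_measure J) (PiM {..<J} (\<lambda>_. borel)) (\<lambda>x. \<lambda>i\<in>{..<J}. x i)
          = distr (gauss_measure J) (gauss_measure J) (\<lambda>x. x)"
        by (rule distr_cong) (auto simp: space_gauss_measure sets_gauss_measure)
      then show ?thesis by simp
    qed
    have "PiM {..<J} (\<lambda>i. distr (gauss_measure J) borel (\<lambda>\<omega>. \<omega> i))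
        = PiM {..<J} (\<lambda>_. std_normal_distribution)"
      by (intro PiM_cong) (auto simp: gauss_coord_distr)
    then have marginals: "PiM {..<J} (\<lambda>i. distr (gauss_measure J) borel (\<lambda>\<omega>. \<omega> i)) = gauss_measure J"
      by (simp add: gauss_measure_def)
    show ?thesis
      using False by (subst P.indep_vars_iff_distr_eq_PiM') (auto simp: restrict_id marginals)
  qed
qed

lemma gauss_lincomb_normal:
  assumes I: "I \<subseteq> {..<J}" and nonzero: "\<exists>j\<in>I. c j \<noteq> 0"
  shows "distributed (gauss_measure J) lborel (\<lambda>\<omega>. \<Sum>j\<in>I. c j * \<omega> j)
           (normal_density 0 (sqrt (\<Sum>j\<in>I. (c j)\<^sup>2)))"
proof -
  interpret P: prob_space "gauss_measure J" by (rule prob_space_gauss_measure)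
  define S where "S = {j\<in>I. c j \<noteq> 0}"
  have finI: "finite I" using I finite_subset by blast
  have S: "finite S" "S \<noteq> {}" "S \<subseteq> {..<J}" using finI nonzero I unfolding S_def by auto
  have sum_S: "(\<lambda>\<omega>. \<Sum>j\<in>I. c j * \<omega> j) = (\<lambda>\<omega>. \<Sum>j\<in>S. c j * \<omega> j)"
    unfolding S_def using finI by (intro ext sum.mono_neutral_right) auto
  have var_S: "(\<Sum>j\<in>I. (c j)\<^sup>2) = (\<Sum>j\<in>S. (c j)\<^sup>2)"
    unfolding S_def using finI by (intro sum.mono_neutral_right) auto
  have indep: "P.indep_vars (\<lambda>_. borel) (\<lambda>j \<omega>. c j * \<omega> j) S"
    using P.indep_vars_compose2[OF gauss_coords_indep, of "\<lambda>j x. c j * x"]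
    by (rule P.indep_vars_subset) (use S in auto)
  have single: "distributed (gauss_measure J) lborel (\<lambda>\<omega>. c j * \<omega> j) (normal_density 0 \<bar>c j\<bar>)"
    if "j \<in> S" for j
    using P.normal_density_affine[OF gauss_coord_distributed, of j "c j" 0] that S
    unfolding S_def by auto
  have "distributed (gauss_measure J) lborel (\<lambda>\<omega>. \<Sum>j\<in>S. c j * \<omega> j)
           (normal_density (\<Sum>j\<in>S. 0) (sqrt (\<Sum>j\<in>S. \<bar>c j\<bar>\<^sup>2)))"
    by (rule P.sum_indep_normal[OF S(1,2) indep]) (use single S_def in auto)
  then show ?thesis by (simp add: sum_S var_S)
qed

lemma gauss_lincomb_second_moment:
  assumes I: "I \<subseteq> {..<J}"
  shows "(\<integral>\<omega>. (\<Sum>j\<in>I. c j * \<omega> j)\<^sup>2 \<partial>gauss_measure J) = (\<Sum>j\<in>I. (c j)\<^sup>2)"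
    and "integrable (gauss_measure J) (\<lambda>\<omega>. (\<Sum>j\<in>I. c j * \<omega> j)\<^sup>2)"
proof -
  interpret P: prob_space "gauss_measure J" by (rule prob_space_gauss_measure)
  have "(\<integral>\<omega>. (\<Sum>j\<in>I. c j * \<omega> j)\<^sup>2 \<partial>gauss_measure J) = (\<Sum>j\<in>I. (c j)\<^sup>2) \<and>
        integrable (gauss_measure J) (\<lambda>\<omega>. (\<Sum>j\<in>I. c j * \<omega> j)\<^sup>2)"
  proof (cases "\<exists>j\<in>I. c j \<noteq> 0")
    case False
    then show ?thesis by simp
  next
    case True
    define \<sigma> where "\<sigma> = sqrt (\<Sum>j\<in>I. (c j)\<^sup>2)"
    obtain i where i: "i \<in> I" "c i \<noteq> 0" using True by blast
    have "0 < (c i)\<^sup>2" using i by simp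
    also have "\<dots> \<le> (\<Sum>j\<in>I. (c j)\<^sup>2)"
      using I finite_subset i by (intro member_le_sum) auto
    finally have "(\<Sum>j\<in>I. (c j)\<^sup>2) > 0" .
    then have \<sigma>: "\<sigma> > 0" "\<sigma>\<^sup>2 = (\<Sum>j\<in>I. (c j)\<^sup>2)" unfolding \<sigma>_def by auto
    note D = gauss_lincomb_normal[OF I True, folded \<sigma>_def]
    have "(\<integral>\<omega>. (\<Sum>j\<in>I. c j * \<omega> j)\<^sup>2 \<partial>gauss_measure J) = (\<integral>x. normal_density 0 \<sigma> x * x\<^sup>2 \<partial>lborel)"
      by (rule distributed_integral[OF D, symmetric]) auto
    also have "\<dots> = \<sigma>\<^sup>2"
      using integral_normal_moment_even[OF \<sigma>(1), of 0 1] by (simp add: power2_eq_square field_simps)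
    finally have "(\<integral>\<omega>. (\<Sum>j\<in>I. c j * \<omega> j)\<^sup>2 \<partial>gauss_measure J) = (\<Sum>j\<in>I. (c j)\<^sup>2)"
      using \<sigma> by simp
    moreover have "integrable (gauss_measure J) (\<lambda>\<omega>. (\<Sum>j\<in>I. c j * \<omega> j)\<^sup>2)"
      using distributed_integrable[OF D, of "\<lambda>x. x\<^sup>2"] integrable_normal_moment[OF \<sigma>(1), of 0 2]
      by simp
    ultimately show ?thesis by blast
  qed
  then show "(\<integral>\<omega>. (\<Sum>j\<in>I. c j * \<omega> j)\<^sup>2 \<partial>gauss_measure J) = (\<Sum>j\<in>I. (c j)\<^sup>2)"
    and "integrable (gauss_measure J) (\<lambda>\<omega>. (\<Sum>j\<in>I. c j * \<omega> j)\<^sup>2)" by auto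
qed

lemma sign_flip_measurable:
  "(\<lambda>\<omega>. \<lambda>j\<in>{..<J}. e j * \<omega> j) \<in> measurable (gauss_measure J) (gauss_measure J)"
proof -
  have "(\<lambda>\<omega>. \<lambda>j\<in>{..<J}. e j * \<omega> j)
          \<in> measurable (PiM {..<J} (\<lambda>_. borel)) (PiM {..<J} (\<lambda>_. borel :: real measure))"
    by measurable
  then show ?thesis by (simp add: measurable_cong_sets[OF sets_gauss_measure sets_gauss_measure])
qed

lemma sign_flip_distr:
  fixes e :: "nat \<Rightarrow> real" assumes e: "\<And>j. \<bar>e j\<bar> = 1"
  shows "distr (gauss_measure J) (gauss_measure J) (\<lambda>\<omega>. \<lambda>j\<in>{..<J}. e j * \<omega> j) = gauss_measure J"
proof (cases "J = 0")
  case True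
  have "distr (gauss_measure J) (gauss_measure J) (\<lambda>\<omega>. \<lambda>j\<in>{..<J}. e j * \<omega> j)
      = distr (gauss_measure J) (gauss_measure J) (\<lambda>\<omega>. \<omega>)"
    by (rule distr_cong) (auto simp: space_gauss_measure True)
  then show ?thesis by simp
next
  case False
  interpret P: prob_space "gauss_measure J" by (rule prob_space_gauss_measure)
  have indep: "P.indep_vars (\<lambda>_. borel) (\<lambda>j \<omega>. e j * \<omega> j) {..<J}"
    by (rule P.indep_vars_compose2[OF gauss_coords_indep]) auto
  have marginal: "distr (gauss_measure J) borel (\<lambda>\<omega>. e j * \<omega> j) = std_normal_distribution"
    if "j < J" for j
  proof -
    have "distributed (gauss_measure J) lborel (\<lambda>\<omega>. 0 + e j * \<omega> j)
            (normal_density (0 + e j * 0) (\<bar>e j\<bar> * 1))"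
      by (rule P.normal_density_affine[OF gauss_coord_distributed[OF that]]) (use e[of j] in auto)
    moreover have "distr (gauss_measure J) borel (\<lambda>\<omega>. e j * \<omega> j)
                 = distr (gauss_measure J) lborel (\<lambda>\<omega>. e j * \<omega> j)"
      by (rule distr_cong) auto
    ultimately show ?thesis using e[of j] unfolding distributed_def by simp
  qed
  have "distr (gauss_measure J) (gauss_measure J) (\<lambda>\<omega>. \<lambda>j\<in>{..<J}. e j * \<omega> j)
      = distr (gauss_measure J) (PiM {..<J} (\<lambda>_. borel)) (\<lambda>\<omega>. \<lambda>j\<in>{..<J}. e j * \<omega> j)"
    by (rule distr_cong) (auto simp: sets_gauss_measure)
  also have "\<dots> = PiM {..<J} (\<lambda>j. distr (gauss_measure J) borel (\<lambda>\<omega>. e j * \<omega> j))"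
    using P.indep_vars_iff_distr_eq_PiM'[where M' = "\<lambda>_. borel" and X = "\<lambda>j \<omega>. e j * \<omega> j"] indep False
    by (simp add: lessThan_empty_iff)
  also have "\<dots> = PiM {..<J} (\<lambda>_. std_normal_distribution)"
    by (intro PiM_cong) (auto simp: marginal)
  finally show ?thesis by (simp add: gauss_measure_def)
qed

lemma sign_flip_integral:
  fixes e :: "nat \<Rightarrow> real" and f :: "(nat \<Rightarrow> real) \<Rightarrow> real"
  assumes e: "\<And>j. \<bar>e j\<bar> = 1" and f: "integrable (gauss_measure J) f"
  shows "integrable (gauss_measure J) (\<lambda>\<omega>. f (\<lambda>j\<in>{..<J}. e j * \<omega> j))"
    and "(\<integral>\<omega>. f (\<lambda>j\<in>{..<J}. e j * \<omega> j) \<partial>gauss_measure J) = (\<integral>\<omega>. f \<omega> \<partial>gauss_measure J)"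
proof -
  have f_meas: "f \<in> borel_measurable (gauss_measure J)" using f by auto
  show "integrable (gauss_measure J) (\<lambda>\<omega>. f (\<lambda>j\<in>{..<J}. e j * \<omega> j))"
    using integrable_distr_eq[OF sign_flip_measurable[where J = J and e = e] f_meas] f sign_flip_distr[OF e] by simp
  show "(\<integral>\<omega>. f (\<lambda>j\<in>{..<J}. e j * \<omega> j) \<partial>gauss_measure J) = (\<integral>\<omega>. f \<omega> \<partial>gauss_measure J)"
    using integral_distr[OF sign_flip_measurable[where J = J and e = e] f_meas] sign_flip_distr[OF e] by simp
qed


lemma c0_bdd_above: "y \<in> c0 \<Longrightarrow> bdd_above (range (\<lambda>k. \<bar>y k\<bar>))"
proof -
  assume "y \<in> c0"
  then have "Bseq y" unfolding c0_def by (auto intro: convergent_imp_Bseq convergentI)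
  then obtain K where "\<And>n. norm (y n) \<le> K" by (auto simp: Bseq_def)
  then show ?thesis by (intro bdd_aboveI[of _ K]) auto
qed

lemma c0_norm_upper: "y \<in> c0 \<Longrightarrow> \<bar>y k\<bar> \<le> c0_norm y"
  unfolding c0_norm_def by (rule cSUP_upper[OF _ c0_bdd_above]) auto

lemma c0_norm_nonneg: "y \<in> c0 \<Longrightarrow> 0 \<le> c0_norm y"
  using c0_norm_upper[of y 0] by linarith

lemma c0_norm_least: "(\<And>k. \<bar>y k\<bar> \<le> B) \<Longrightarrow> c0_norm y \<le> B"
  unfolding c0_norm_def by (rule cSUP_least) auto

lemma c0_norm_sq_upper: "y \<in> c0 \<Longrightarrow> (y k)\<^sup>2 \<le> (c0_norm y)\<^sup>2"
  using c0_norm_upper[of y k] by (metis abs_ge_zero power2_abs power_mono)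

lemma c0_lincomb: "(\<And>j. j \<in> I \<Longrightarrow> x j \<in> c0) \<Longrightarrow> (\<lambda>k. \<Sum>j\<in>I. w j * x j k) \<in> c0"
  unfolding c0_def by (auto intro!: tendsto_null_sum tendsto_mult_right_zero)

definition gauss_norm_sq :: "nat \<Rightarrow> (nat \<Rightarrow> nat \<Rightarrow> real) \<Rightarrow> (nat \<Rightarrow> real) \<Rightarrow> real" where
  "gauss_norm_sq J x \<omega> = (c0_norm (\<lambda>k. \<Sum>j<J. \<omega> j * x j k))\<^sup>2"

lemma gauss_sq_c0_eq: "gauss_sq_c0 J x = (\<integral>\<omega>. gauss_norm_sq J x \<omega> \<partial>gauss_measure J)"
  unfolding gauss_sq_c0_def gauss_norm_sq_def ..

lemma gauss_sq_c0_nonneg: "0 \<le> gauss_sq_c0 J x"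
  unfolding gauss_sq_c0_def by (rule integral_nonneg_AE) auto

lemma coord_sq_le_gauss_norm_sq:
  assumes "\<And>j. j < J \<Longrightarrow> x j \<in> c0"
  shows "(\<Sum>j<J. \<omega> j * x j m)\<^sup>2 \<le> gauss_norm_sq J x \<omega>"
  unfolding gauss_norm_sq_def
  using c0_norm_sq_upper[OF c0_lincomb, of "{..<J}" x \<omega> m] assms by simp

lemma gauss_norm_sq_measurable:
  assumes "\<And>j. j < J \<Longrightarrow> x j \<in> c0"
  shows "gauss_norm_sq J x \<in> borel_measurable (gauss_measure J)"
proof -
  have "(\<lambda>\<omega>. c0_norm (\<lambda>k. \<Sum>j<J. \<omega> j * x j k)) \<in> borel_measurable (gauss_measure J)"
    unfolding c0_norm_def
  proof (rule borel_measurable_cSUP)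
    show "bdd_above ((\<lambda>k. \<bar>\<Sum>j<J. \<omega> j * x j k\<bar>) ` UNIV)" for \<omega>
      by (rule c0_bdd_above, rule c0_lincomb) (use assms in auto)
  qed auto
  then show ?thesis unfolding gauss_norm_sq_def[abs_def] by measurable
qed

text \<open>Integrability: by the triangle inequality and Cauchy--Schwarz,
  ||sum_j g_j x_j||^2 <= J sum_j (||x_j|| g_j)^2, which has finite mean.\<close>

lemma gauss_norm_sq_integrable:
  assumes x: "\<And>j. j < J \<Longrightarrow> x j \<in> c0"
  shows "integrable (gauss_measure J) (gauss_norm_sq J x)"
proof (rule Bochner_Integration.integrable_bound)
  define B where "B j = c0_norm (x j)" for j
  have moment: "integrable (gauss_measure J) (\<lambda>\<omega>. (B j * \<omega> j)\<^sup>2)" if "j < J" for j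
    using gauss_lincomb_second_moment(2)[of "{j}" J "\<lambda>_. B j"] that by simp
  show "integrable (gauss_measure J) (\<lambda>\<omega>. (\<Sum>j<J. (B j * \<omega> j)\<^sup>2) * card {..<J})"
    using moment by (intro integrable_mult_left integrable_sum) auto
  show "AE \<omega> in gauss_measure J. norm (gauss_norm_sq J x \<omega>)
          \<le> norm ((\<Sum>j<J. (B j * \<omega> j)\<^sup>2) * card {..<J})"
  proof (rule AE_I2)
    fix \<omega>
    have "c0_norm (\<lambda>k. \<Sum>j<J. \<omega> j * x j k) \<le> (\<Sum>j<J. \<bar>B j * \<omega> j\<bar>)"
    proof (rule c0_norm_least)
      fix k
      have "\<bar>\<Sum>j<J. \<omega> j * x j k\<bar> \<le> (\<Sum>j<J. \<bar>\<omega> j\<bar> * \<bar>x j k\<bar>)"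
        using sum_abs[of "\<lambda>j. \<omega> j * x j k" "{..<J}"] by (simp add: abs_mult)
      also have "\<dots> \<le> (\<Sum>j<J. \<bar>\<omega> j\<bar> * B j)"
        using x c0_norm_upper unfolding B_def by (intro sum_mono mult_left_mono) auto
      also have "\<dots> = (\<Sum>j<J. \<bar>B j * \<omega> j\<bar>)"
        using x c0_norm_nonneg unfolding B_def by (intro sum.cong) (auto simp: abs_mult)
      finally show "\<bar>\<Sum>j<J. \<omega> j * x j k\<bar> \<le> (\<Sum>j<J. \<bar>B j * \<omega> j\<bar>)" .
    qed
    moreover have "0 \<le> c0_norm (\<lambda>k. \<Sum>j<J. \<omega> j * x j k)"
      by (rule c0_norm_nonneg, rule c0_lincomb) (use x in auto)
    ultimately have "gauss_norm_sq J x \<omega> \<le> (\<Sum>j<J. \<bar>B j * \<omega> j\<bar>)\<^sup>2"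
      unfolding gauss_norm_sq_def by (rule power_mono)
    also have "\<dots> \<le> (\<Sum>j<J. (\<bar>B j * \<omega> j\<bar>)\<^sup>2) * card {..<J}"
      by (rule sum_squared_le_sum_of_squares)
    finally show "norm (gauss_norm_sq J x \<omega>) \<le> norm ((\<Sum>j<J. (B j * \<omega> j)\<^sup>2) * card {..<J})"
      by (simp add: sum_nonneg gauss_norm_sq_def)
  qed
qed (rule gauss_norm_sq_measurable[OF x])

section \<open>Reduction of the gamma-bound to a quadratic inequality\<close>

lemma gauss_sq_real_eq: "gauss_sq_real J y = (\<Sum>j<J. (y j)\<^sup>2)"
proof -
  have "gauss_sq_real J y = (\<integral>\<omega>. (\<Sum>j\<in>{..<J}. y j * \<omega> j)\<^sup>2 \<partial>gauss_measure J)"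
    unfolding gauss_sq_real_def by (simp add: mult.commute)
  also have "\<dots> = (\<Sum>j<J. (y j)\<^sup>2)" by (rule gauss_lincomb_second_moment(1)) auto
  finally show ?thesis .
qed

text \<open>Testing against one coordinate functional: sum_j x_j(m)^2 = E |sum_j g_j x_j(m)|^2 is at
  most E ||sum_j g_j x_j||^2.\<close>

lemma coord_sq_sum_le_gauss_sq_c0:
  assumes x: "\<And>j. j < J \<Longrightarrow> x j \<in> c0"
  shows "(\<Sum>j<J. (x j m)\<^sup>2) \<le> gauss_sq_c0 J x"
proof -
  have "(\<Sum>j<J. (x j m)\<^sup>2) = (\<integral>\<omega>. (\<Sum>j\<in>{..<J}. x j m * \<omega> j)\<^sup>2 \<partial>gauss_measure J)"
    by (rule gauss_lincomb_second_moment(1)[symmetric]) auto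
  also have "\<dots> \<le> (\<integral>\<omega>. gauss_norm_sq J x \<omega> \<partial>gauss_measure J)"
    using coord_sq_le_gauss_norm_sq[where J = J and x = x and m = m] x
    by (intro integral_mono gauss_lincomb_second_moment(2) gauss_norm_sq_integrable[OF x])
       (auto simp: mult.commute)
  finally show ?thesis unfolding gauss_sq_c0_eq .
qed

definition gamma_admissible :: "((nat \<Rightarrow> real) \<Rightarrow> real) set \<Rightarrow> real \<Rightarrow> bool" where
  "gamma_admissible \<T> C \<longleftrightarrow> (\<forall>J (S :: nat \<Rightarrow> (nat \<Rightarrow> real) \<Rightarrow> real) (x :: nat \<Rightarrow> nat \<Rightarrow> real).
      (\<forall>j<J. S j \<in> \<T>) \<longrightarrow> (\<forall>j<J. x j \<in> c0) \<longrightarrow>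
      sqrt (gauss_sq_real J (\<lambda>j. S j (x j))) \<le> C * sqrt (gauss_sq_c0 J x))"

lemma gamma_bound_eq: "gamma_bound \<T> = Inf {C. gamma_admissible \<T> C}"
  unfolding gamma_bound_def gamma_admissible_def ..

lemma gamma_admissible_coordI:
  assumes C: "C \<ge> 0"
    and bound: "\<And>J n x. (\<And>j. j < J \<Longrightarrow> n j \<in> I) \<Longrightarrow> (\<And>j. j < J \<Longrightarrow> x j \<in> c0) \<Longrightarrow>
                   (\<Sum>j<J. (x j (n j))\<^sup>2) \<le> C\<^sup>2 * gauss_sq_c0 J x"
  shows "gamma_admissible (coord ` I) C"
  unfolding gamma_admissible_def
proof (intro allI impI)
  fix J and S :: "nat \<Rightarrow> (nat \<Rightarrow> real) \<Rightarrow> real" and x :: "nat \<Rightarrow> nat \<Rightarrow> real"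
  assume S: "\<forall>j<J. S j \<in> coord ` I" and x: "\<forall>j<J. x j \<in> c0"
  have "\<forall>j. \<exists>m. j < J \<longrightarrow> m \<in> I \<and> S j = coord m" using S by blast
  then obtain n where n: "\<And>j. j < J \<Longrightarrow> n j \<in> I \<and> S j = coord (n j)"
    by metis
  have "gauss_sq_real J (\<lambda>j. S j (x j)) = (\<Sum>j<J. (x j (n j))\<^sup>2)"
    unfolding gauss_sq_real_eq using n by (intro sum.cong) (auto simp: coord_def)
  also have "\<dots> \<le> C\<^sup>2 * gauss_sq_c0 J x"
    using n x by (intro bound) auto
  finally show "sqrt (gauss_sq_real J (\<lambda>j. S j (x j))) \<le> C * sqrt (gauss_sq_c0 J x)"
    using C real_sqrt_le_mono by (fastforce simp: real_sqrt_mult)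
qed


section \<open>Lower bound: the maximum of N squared standard Gaussians\<close>

lemma std_normal_density_pos: "0 < std_normal_density x"
  unfolding std_normal_density_def by simp

lemma std_normal_density_minus: "std_normal_density (- x) = std_normal_density x"
  unfolding std_normal_density_def by simp

lemma std_normal_density_deriv:
  "(std_normal_density has_real_derivative (- x * std_normal_density x)) (at x)"
  unfolding std_normal_density_def
  by (auto intro!: derivative_eq_intros simp: power2_eq_square field_simps)

text \<open>On [s, \<infinity>) the excess density phi(x) (x^2 - s^2) is dominated by
  (x/s) phi(x) (x^2 - s^2), which has the explicit antiderivative -(x^2 + 2 - s^2) phi(x) / s.\<close>

definition tail_majorant :: "real \<Rightarrow> real \<Rightarrow> real" where
  "tail_majorant s x = (x ^ 3 - s\<^sup>2 * x) / s * std_normal_density x"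

lemma tail_majorant_antiderivative:
  assumes "s > 0"
  shows "((\<lambda>x. - (x\<^sup>2 + 2 - s\<^sup>2) * std_normal_density x / s) has_real_derivative tail_majorant s x) (at x)"
  unfolding tail_majorant_def using std_normal_density_deriv[of x] assms
  by (auto intro!: derivative_eq_intros simp: power2_eq_square)
     (simp add: algebra_simps power3_eq_cube)

lemma tail_majorant_ge:
  assumes s: "s > 0" and x: "s \<le> x"
  shows "std_normal_density x * max 0 (x\<^sup>2 - s\<^sup>2) \<le> tail_majorant s x"
proof -
  have excess: "0 \<le> x\<^sup>2 - s\<^sup>2" using s x by (simp add: power_mono)
  have "tail_majorant s x = (x / s) * ((x\<^sup>2 - s\<^sup>2) * std_normal_density x)"
    unfolding tail_majorant_def by (simp add: field_simps power2_eq_square power3_eq_cube)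
  moreover have "1 * ((x\<^sup>2 - s\<^sup>2) * std_normal_density x) \<le> (x / s) * ((x\<^sup>2 - s\<^sup>2) * std_normal_density x)"
    using s x excess std_normal_density_pos[of x] by (intro mult_right_mono) auto
  ultimately show ?thesis using excess by (simp add: mult.commute)
qed

lemma tail_majorant_measurable [measurable]: "tail_majorant s \<in> borel_measurable borel"
  unfolding tail_majorant_def[abs_def] std_normal_density_def by measurable

lemma tail_majorant_integral:
  assumes s: "s > 0"
  shows "(\<integral>\<^sup>+x. ennreal (tail_majorant s x) * indicator {s..} x \<partial>lborel)
       = ennreal (2 * std_normal_density s / s)"
proof -
  define F where "F x = - (x\<^sup>2 + 2 - s\<^sup>2) * std_normal_density x / s" for x
  have "(F \<longlongrightarrow> 0) at_top"
    unfolding F_def std_normal_density_def using s by real_asymp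
  moreover have "0 \<le> tail_majorant s x" if "s \<le> x" for x
    using tail_majorant_ge[OF s that] std_normal_density_pos[of x] by (simp add: order_trans[rotated])
  ultimately have "(\<integral>\<^sup>+x. ennreal (tail_majorant s x) * indicator {s..} x \<partial>lborel) = 0 - F s"
    using tail_majorant_antiderivative[OF s] unfolding F_def[abs_def]
    by (intro nn_integral_FTC_atLeast) auto
  then show ?thesis by (simp add: F_def)
qed

text \<open>Gaussian excess over the level s^2: E (g^2 - s^2)^+ <= 4 phi(s) / s, by symmetry
  and the majorant above.\<close>

lemma gauss_excess_nn_integral:
  assumes s: "s > 0"
  shows "(\<integral>\<^sup>+x. ennreal (std_normal_density x * max 0 (x\<^sup>2 - s\<^sup>2)) \<partial>lborel)
           \<le> ennreal (4 * std_normal_density s / s)"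
proof -
  let ?h = "\<lambda>x. ennreal (tail_majorant s x) * indicator {s..} x"
  have pointwise: "ennreal (std_normal_density x * max 0 (x\<^sup>2 - s\<^sup>2)) \<le> ?h x + ?h (- x)" for x
  proof (cases "s \<le> x \<or> s \<le> - x")
    case True
    then consider "s \<le> x" | "s \<le> - x" by blast
    then show ?thesis
    proof cases
      case 1
      then have "ennreal (std_normal_density x * max 0 (x\<^sup>2 - s\<^sup>2)) \<le> ?h x"
        using tail_majorant_ge[OF s] by (simp add: ennreal_leI)
      moreover have "?h x \<le> ?h x + ?h (- x)" by (rule add_increasing2) auto
      ultimately show ?thesis by (rule order_trans)
    next
      case 2
      then have "ennreal (std_normal_density x * max 0 (x\<^sup>2 - s\<^sup>2)) \<le> ?h (- x)"
        using tail_majorant_ge[OF s 2] by (simp add: ennreal_leI std_normal_density_minus)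
      moreover have "?h (- x) \<le> ?h x + ?h (- x)" by (rule add_increasing) auto
      ultimately show ?thesis by (rule order_trans)
    qed
  next
    case False
    then have "x\<^sup>2 \<le> s\<^sup>2" using s by (simp add: abs_le_square_iff[symmetric] abs_if)
    then show ?thesis by simp
  qed
  have reflect: "(\<integral>\<^sup>+x. ?h (- x) \<partial>lborel) = (\<integral>\<^sup>+x. ?h x \<partial>lborel)"
    using nn_integral_real_affine[of ?h "-1" 0] by simp
  have "(\<integral>\<^sup>+x. ennreal (std_normal_density x * max 0 (x\<^sup>2 - s\<^sup>2)) \<partial>lborel)
      \<le> (\<integral>\<^sup>+x. ?h x + ?h (- x) \<partial>lborel)"
    by (rule nn_integral_mono) (use pointwise in auto)
  also have "\<dots> = (\<integral>\<^sup>+x. ?h x \<partial>lborel) + (\<integral>\<^sup>+x. ?h (- x) \<partial>lborel)"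
    by (rule nn_integral_add) (auto simp: tail_majorant_def)
  also have "\<dots> = ennreal (2 * std_normal_density s / s) + ennreal (2 * std_normal_density s / s)"
    unfolding reflect tail_majorant_integral[OF s] ..
  also have "\<dots> = ennreal (4 * std_normal_density s / s)"
    using std_normal_density_pos[of s] s by (simp flip: ennreal_plus)
  finally show ?thesis .
qed

lemma gauss_excess_integral:
  assumes s: "s > 0"
  shows "integrable lborel (\<lambda>x. std_normal_density x * max 0 (x\<^sup>2 - s\<^sup>2))"
    and "(\<integral>x. std_normal_density x * max 0 (x\<^sup>2 - s\<^sup>2) \<partial>lborel) \<le> 4 * std_normal_density s / s"
proof -
  have nonneg: "0 \<le> std_normal_density x * max 0 (x\<^sup>2 - s\<^sup>2)" for x by simp
  show int: "integrable lborel (\<lambda>x. std_normal_density x * max 0 (x\<^sup>2 - s\<^sup>2))"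
    using gauss_excess_nn_integral[OF s] nonneg
    by (intro integrableI_nonneg) (auto simp: top.not_eq_extremum intro: le_less_trans)
  have "ennreal (\<integral>x. std_normal_density x * max 0 (x\<^sup>2 - s\<^sup>2) \<partial>lborel)
     = (\<integral>\<^sup>+x. ennreal (std_normal_density x * max 0 (x\<^sup>2 - s\<^sup>2)) \<partial>lborel)"
    by (rule nn_integral_eq_integral[symmetric]) (use int nonneg in auto)
  also have "\<dots> \<le> ennreal (4 * std_normal_density s / s)" by (rule gauss_excess_nn_integral[OF s])
  finally show "(\<integral>x. std_normal_density x * max 0 (x\<^sup>2 - s\<^sup>2) \<partial>lborel) \<le> 4 * std_normal_density s / s"
    using s by (subst (asm) ennreal_le_iff) auto
qed

text \<open>The test vectors: unit_vec j is the unit vector e_(j+1) of c0, so that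
  sum_(j<N) g_j unit_vec j = (0, g_0, ..., g_(N-1), 0, ...).\<close>

definition unit_vec :: "nat \<Rightarrow> nat \<Rightarrow> real" where
  "unit_vec j = (\<lambda>k. if k = Suc j then 1 else 0)"

lemma unit_vec_c0: "unit_vec j \<in> c0"
  unfolding c0_def unit_vec_def mem_Collect_eq
  by (rule tendsto_eventually, rule eventually_sequentiallyI[of "Suc (Suc j)"]) auto

lemma unit_vec_lincomb:
  "(\<Sum>j<N. \<omega> j * unit_vec j k) = (if k \<noteq> 0 \<and> k - 1 < N then \<omega> (k - 1) else 0)"
proof (cases k)
  case (Suc i)
  have "(\<Sum>j<N. \<omega> j * unit_vec j k) = (\<Sum>j\<in>{..<N}. if i = j then \<omega> j else 0)"
    unfolding unit_vec_def Suc by (rule sum.cong) auto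
  then show ?thesis using Suc by simp
qed (simp add: unit_vec_def)

lemma gauss_norm_sq_unit_vec_le:
  assumes a: "a \<ge> 0"
  shows "gauss_norm_sq N unit_vec \<omega> \<le> a + (\<Sum>j<N. max 0 ((\<omega> j)\<^sup>2 - a))"
proof -
  define R where "R = a + (\<Sum>j<N. max 0 ((\<omega> j)\<^sup>2 - a))"
  have R: "R \<ge> 0" unfolding R_def using a by (auto intro!: sum_nonneg add_nonneg_nonneg)
  have "(\<Sum>j<N. \<omega> j * unit_vec j k)\<^sup>2 \<le> R" for k
  proof (cases "k \<noteq> 0 \<and> k - 1 < N")
    case True
    have "max 0 ((\<omega> (k - 1))\<^sup>2 - a) \<le> (\<Sum>j<N. max 0 ((\<omega> j)\<^sup>2 - a))"
      by (rule member_le_sum[of "k - 1" _ "\<lambda>j. max 0 ((\<omega> j)\<^sup>2 - a)"]) (use True in auto)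
    moreover have "(\<omega> (k - 1))\<^sup>2 - a \<le> max 0 ((\<omega> (k - 1))\<^sup>2 - a)" by simp
    moreover have "(\<Sum>j<N. \<omega> j * unit_vec j k)\<^sup>2 = (\<omega> (k - 1))\<^sup>2"
      using True by (simp add: unit_vec_lincomb)
    ultimately show ?thesis unfolding R_def by linarith
  qed (use R in \<open>auto simp: unit_vec_lincomb\<close>)
  then have "c0_norm (\<lambda>k. \<Sum>j<N. \<omega> j * unit_vec j k) \<le> sqrt R"
    by (intro c0_norm_least) (metis real_sqrt_abs real_sqrt_le_mono)
  moreover have "0 \<le> c0_norm (\<lambda>k. \<Sum>j<N. \<omega> j * unit_vec j k)"
    by (rule c0_norm_nonneg, rule c0_lincomb) (auto intro: unit_vec_c0)
  ultimately have "gauss_norm_sq N unit_vec \<omega> \<le> (sqrt R)\<^sup>2"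
    unfolding gauss_norm_sq_def by (rule power_mono)
  then show ?thesis using R unfolding R_def by simp
qed

lemma gauss_sq_c0_unit_vec_le:
  assumes s: "s > 0"
  shows "gauss_sq_c0 N unit_vec \<le> s\<^sup>2 + real N * (4 * std_normal_density s / s)"
proof -
  interpret P: prob_space "gauss_measure N" by (rule prob_space_gauss_measure)
  have excess: "integrable (gauss_measure N) (\<lambda>\<omega>. max 0 ((\<omega> j)\<^sup>2 - s\<^sup>2))"
      "(\<integral>\<omega>. max 0 ((\<omega> j)\<^sup>2 - s\<^sup>2) \<partial>gauss_measure N) \<le> 4 * std_normal_density s / s"
    if "j < N" for j
  proof -
    note D = gauss_coord_distributed[OF that]
    show "integrable (gauss_measure N) (\<lambda>\<omega>. max 0 ((\<omega> j)\<^sup>2 - s\<^sup>2))"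
      using distributed_integrable[OF D, of "\<lambda>x. max 0 (x\<^sup>2 - s\<^sup>2)"] gauss_excess_integral(1)[OF s]
      by auto
    have "(\<integral>\<omega>. max 0 ((\<omega> j)\<^sup>2 - s\<^sup>2) \<partial>gauss_measure N)
        = (\<integral>x. std_normal_density x * max 0 (x\<^sup>2 - s\<^sup>2) \<partial>lborel)"
      by (rule distributed_integral[OF D, symmetric]) auto
    then show "(\<integral>\<omega>. max 0 ((\<omega> j)\<^sup>2 - s\<^sup>2) \<partial>gauss_measure N) \<le> 4 * std_normal_density s / s"
      using gauss_excess_integral(2)[OF s] by simp
  qed
  have "gauss_sq_c0 N unit_vec \<le> (\<integral>\<omega>. s\<^sup>2 + (\<Sum>j<N. max 0 ((\<omega> j)\<^sup>2 - s\<^sup>2)) \<partial>gauss_measure N)"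
    unfolding gauss_sq_c0_eq using excess(1)
    by (intro integral_mono gauss_norm_sq_integrable gauss_norm_sq_unit_vec_le unit_vec_c0
        Bochner_Integration.integrable_add integrable_sum) auto
  also have "\<dots> = s\<^sup>2 + (\<Sum>j<N. (\<integral>\<omega>. max 0 ((\<omega> j)\<^sup>2 - s\<^sup>2) \<partial>gauss_measure N))"
    using excess(1)
    by (subst Bochner_Integration.integral_add) (auto simp: Bochner_Integration.integral_sum P.prob_space)
  also have "\<dots> \<le> s\<^sup>2 + (\<Sum>j<N. 4 * std_normal_density s / s)"
    using excess(2) by (intro add_left_mono sum_mono) auto
  finally show ?thesis by simp
qed

lemma gauss_sq_c0_unit_vec_log:
  assumes N: "N \<ge> 2"
  shows "gauss_sq_c0 N unit_vec \<le> 2 * ln (2 * real N)"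
proof -
  define L where "L = ln (real N)"
  define s where "s = sqrt (2 * L)"
  have ln2: "ln (2::real) > 69/100" using ln_approx_bounds[of 2 3] by (simp add: eval_nat_numeral)
  have L: "L \<ge> ln 2" unfolding L_def using N by simp
  then have s: "s > 0" "s\<^sup>2 = 2 * L" unfolding s_def using ln2 by auto
  have density: "std_normal_density s = 1 / (real N * sqrt (2 * pi))"
  proof -
    have "exp (- s\<^sup>2 / 2) = 1 / real N"
      using s(2) N unfolding L_def by (simp add: exp_minus inverse_eq_divide)
    then show ?thesis unfolding std_normal_density_def by simp
  qed
  have small: "4 / (sqrt (2 * pi) * s) \<le> 2 * ln 2"
  proof -
    have "(69/100)\<^sup>2 * (314/100 * (69/100)) \<le> (ln 2)\<^sup>2 * (pi * L)"
      using ln2 pi_approx L by (intro mult_mono power_mono) auto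
    then have "1 \<le> sqrt ((ln 2)\<^sup>2 * (pi * L))" by (simp add: power2_eq_square)
    then have "1 \<le> ln 2 * sqrt (pi * L)" using ln2 by (simp add: real_sqrt_mult)
    moreover have "sqrt (2 * pi) * s = 2 * sqrt (pi * L)"
      unfolding s_def by (simp add: real_sqrt_mult[symmetric] mult_ac)
        (simp add: real_sqrt_mult)
    moreover have "0 < sqrt (pi * L)" using ln2 L by simp
    ultimately show ?thesis using ln2 s by (simp add: divide_simps)
  qed
  have "gauss_sq_c0 N unit_vec \<le> s\<^sup>2 + real N * (4 * std_normal_density s / s)"
    by (rule gauss_sq_c0_unit_vec_le[OF s(1)])
  also have "real N * (4 * std_normal_density s / s) = 4 / (sqrt (2 * pi) * s)"
    using N by (simp add: density field_simps)
  also have "s\<^sup>2 + 4 / (sqrt (2 * pi) * s) \<le> 2 * L + 2 * ln 2" using small s by simp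
  also have "2 * L + 2 * ln 2 = 2 * ln (2 * real N)" unfolding L_def using N by (simp add: ln_mult)
  finally show ?thesis .
qed

lemma gamma_admissible_coord_lower:
  assumes N: "N \<ge> 2" and C: "gamma_admissible (coord ` {1..N}) C"
  shows "sqrt (real N / (2 * ln (2 * real N))) \<le> C"
proof -
  define D where "D = 2 * ln (2 * real N)"
  have D: "D > 0" unfolding D_def using N by simp
  have "\<forall>j<N. coord (Suc j) \<in> coord ` {1..N}" "\<forall>j<N. unit_vec j \<in> c0"
    by (auto intro: unit_vec_c0)
  then have "sqrt (gauss_sq_real N (\<lambda>j. coord (Suc j) (unit_vec j))) \<le> C * sqrt (gauss_sq_c0 N unit_vec)"
    using C[unfolded gamma_admissible_def, rule_format, of N "\<lambda>j. coord (Suc j)" unit_vec] by blast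
  moreover have "gauss_sq_real N (\<lambda>j. coord (Suc j) (unit_vec j)) = real N"
    unfolding gauss_sq_real_eq by (simp add: coord_def unit_vec_def)
  ultimately have test: "sqrt (real N) \<le> C * sqrt (gauss_sq_c0 N unit_vec)" by simp
  have "0 < sqrt (real N)" using N by simp
  then have "0 < C" using test gauss_sq_c0_nonneg[of N unit_vec]
    by (metis order_less_le_trans real_sqrt_ge_zero mult_nonpos_nonneg not_le)
  moreover have "sqrt (gauss_sq_c0 N unit_vec) \<le> sqrt D"
    unfolding D_def using gauss_sq_c0_unit_vec_log[OF N] by simp
  ultimately have "sqrt (real N) \<le> C * sqrt D"
    using test by (meson mult_left_mono less_imp_le order_trans)
  then show ?thesis
    using D unfolding D_def[symmetric] by (simp add: real_sqrt_divide divide_simps mult.commute)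
qed


section \<open>Upper bound: blocks of indices and sign averaging\<close>

text \<open>Indices j < J with n_j = m form the block of m; the block sum Z_m = sum over the block of
  g_j x_j(m) is centred normal with variance block_var, and sum_j x_j(n_j)^2 = sum_m block_var m.\<close>

definition block :: "nat \<Rightarrow> (nat \<Rightarrow> nat) \<Rightarrow> nat \<Rightarrow> nat set" where
  "block J n m = {j. j < J \<and> n j = m}"

definition block_sum :: "nat \<Rightarrow> (nat \<Rightarrow> nat) \<Rightarrow> (nat \<Rightarrow> nat \<Rightarrow> real) \<Rightarrow> nat \<Rightarrow> (nat \<Rightarrow> real) \<Rightarrow> real"
  where "block_sum J n x m \<omega> = (\<Sum>j\<in>block J n m. x j m * \<omega> j)"

definition block_var :: "nat \<Rightarrow> (nat \<Rightarrow> nat) \<Rightarrow> (nat \<Rightarrow> nat \<Rightarrow> real) \<Rightarrow> nat \<Rightarrow> real" where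
  "block_var J n x m = (\<Sum>j\<in>block J n m. (x j m)\<^sup>2)"

lemma block_subset: "block J n m \<subseteq> {..<J}"
  unfolding block_def by auto

lemma sum_over_blocks:
  assumes "finite I" and n: "\<And>j. j < J \<Longrightarrow> n j \<in> I"
  shows "(\<Sum>j<J. a j) = (\<Sum>m\<in>I. \<Sum>j\<in>block J n m. a j)"
proof -
  have "n ` {..<J} \<subseteq> I" using n by auto
  from sum.group[OF finite_lessThan assms(1) this, of a] show ?thesis
    unfolding block_def by simp
qed

lemma block_var_nonneg: "0 \<le> block_var J n x m"
  unfolding block_var_def by (auto intro: sum_nonneg)

lemma sum_block_var:
  assumes n: "\<And>j. j < J \<Longrightarrow> n j \<in> {1..N}"
  shows "(\<Sum>j<J. (x j (n j))\<^sup>2) = (\<Sum>m\<in>{1..N}. block_var J n x m)"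
proof -
  have "(\<Sum>j<J. (x j (n j))\<^sup>2) = (\<Sum>m\<in>{1..N}. \<Sum>j\<in>block J n m. (x j (n j))\<^sup>2)"
    by (rule sum_over_blocks[OF _ n]) simp
  also have "\<dots> = (\<Sum>m\<in>{1..N}. block_var J n x m)"
    unfolding block_var_def by (intro sum.cong refl) (auto simp: block_def)
  finally show ?thesis .
qed

lemma block_var_le_gauss_sq_c0:
  assumes "\<And>j. j < J \<Longrightarrow> x j \<in> c0"
  shows "block_var J n x m \<le> gauss_sq_c0 J x"
proof -
  have "block_var J n x m \<le> (\<Sum>j<J. (x j m)\<^sup>2)"
    unfolding block_var_def by (rule sum_mono2) (auto simp: block_def)
  also have "\<dots> \<le> gauss_sq_c0 J x" by (rule coord_sq_sum_le_gauss_sq_c0[OF assms])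
  finally show ?thesis .
qed

lemma block_sum_measurable [measurable]: "block_sum J n x m \<in> borel_measurable (gauss_measure J)"
proof -
  have "(\<lambda>\<omega>. \<Sum>j\<in>block J n m. x j m * \<omega> j) \<in> borel_measurable (PiM {..<J} (\<lambda>_. borel))"
    using block_subset by (intro borel_measurable_sum borel_measurable_times borel_measurable_const)
      (auto intro!: measurable_component_singleton)
  then show ?thesis
    unfolding block_sum_def[abs_def] by (simp add: measurable_cong_sets[OF sets_gauss_measure refl])
qed

lemma block_sum_normal:
  assumes "block_var J n x m > 0"
  shows "distributed (gauss_measure J) lborel (block_sum J n x m)
           (normal_density 0 (sqrt (block_var J n x m)))"
proof -
  have "\<exists>j\<in>block J n m. x j m \<noteq> 0"
    using assms unfolding block_var_def by (metis (no_types, lifting) less_irrefl power_zero_numeral sum.neutral)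
  from gauss_lincomb_normal[OF block_subset this] show ?thesis
    unfolding block_sum_def[abs_def] block_var_def by simp
qed

text \<open>Blocks are disjoint sets of coordinates, so the block sums are independent.\<close>

lemma block_sum_indep:
  assumes "m \<noteq> m'"
  shows "prob_space.indep_var (gauss_measure J) borel (block_sum J n x m) borel (block_sum J n x m')"
proof -
  interpret P: prob_space "gauss_measure J" by (rule prob_space_gauss_measure)
  have disjoint: "block J n m \<inter> block J n m' = {}" using assms unfolding block_def by auto
  let ?f = "\<lambda>m f. \<Sum>j\<in>block J n m. x j m * f j"
  have "P.indep_var borel (?f m \<circ> (\<lambda>\<omega>. restrict \<omega> (block J n m)))
          borel (?f m' \<circ> (\<lambda>\<omega>. restrict \<omega> (block J n m')))"
    by (rule P.indep_var_compose[OF P.indep_var_restrict[OF gauss_coords_indep disjoint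
          block_subset block_subset]]) measurable
  moreover have "?f k \<circ> (\<lambda>\<omega>. restrict \<omega> (block J n k)) = block_sum J n x k" for k
    unfolding block_sum_def by (auto intro!: ext sum.cong)
  ultimately show ?thesis by simp
qed

definition sign_of :: "nat set \<Rightarrow> nat \<Rightarrow> real" where
  "sign_of B p = (if p \<in> B then -1 else 1)"

lemma abs_sign_of [simp]: "\<bar>sign_of B p\<bar> = 1"
  unfolding sign_of_def by simp

lemma sum_sign_patterns_sq:
  fixes v :: "nat \<Rightarrow> real"
  assumes "finite P"
  shows "(\<Sum>B\<in>Pow P. (\<Sum>p\<in>P. sign_of B p * v p)\<^sup>2) = 2 ^ card P * (\<Sum>p\<in>P. (v p)\<^sup>2)"
  using assms
proof (induction P rule: finite_induct)
  case empty
  then show ?case by simp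
next
  case (insert a P)
  define u where "u B = (\<Sum>p\<in>P. sign_of B p * v p)" for B
  have keep: "(\<Sum>p\<in>insert a P. sign_of B p * v p) = v a + u B" if "B \<in> Pow P" for B
    using that insert.hyps unfolding u_def by (auto simp: sign_of_def)
  have flip: "(\<Sum>p\<in>insert a P. sign_of (insert a B) p * v p) = - v a + u B" if "B \<in> Pow P" for B
  proof -
    have "(\<Sum>p\<in>P. sign_of (insert a B) p * v p) = u B"
      unfolding u_def using insert.hyps(2) by (intro sum.cong) (auto simp: sign_of_def)
    then show ?thesis using insert.hyps by (simp add: sign_of_def)
  qed
  have "(\<Sum>B\<in>Pow (insert a P). (\<Sum>p\<in>insert a P. sign_of B p * v p)\<^sup>2)
      = (\<Sum>B\<in>Pow P. (\<Sum>p\<in>insert a P. sign_of B p * v p)\<^sup>2) +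
        (\<Sum>B\<in>Pow P. (\<Sum>p\<in>insert a P. sign_of (insert a B) p * v p)\<^sup>2)"
  proof -
    have "inj_on (insert a) (Pow P)" "Pow P \<inter> insert a ` Pow P = {}"
      using insert.hyps(2) by (auto simp: inj_on_def)
    then show ?thesis
      unfolding Pow_insert using insert.hyps(1)
      by (subst sum.union_disjoint) (auto simp: sum.reindex)
  qed
  also have "\<dots> = (\<Sum>B\<in>Pow P. (v a + u B)\<^sup>2) + (\<Sum>B\<in>Pow P. (- v a + u B)\<^sup>2)"
    by (intro arg_cong2[where f = "(+)"] sum.cong) (auto simp: keep flip)
  also have "\<dots> = (\<Sum>B\<in>Pow P. 2 * (v a)\<^sup>2 + 2 * (u B)\<^sup>2)"
    by (simp add: sum.distrib[symmetric] power2_eq_square algebra_simps)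
  also have "\<dots> = 2 ^ card (insert a P) * (\<Sum>p\<in>insert a P. (v p)\<^sup>2)"
    using insert by (simp add: u_def sum.distrib sum_distrib_left[symmetric] card_Pow algebra_simps)
  finally show ?case .
qed

definition block_flip :: "nat \<Rightarrow> (nat \<Rightarrow> nat) \<Rightarrow> nat set \<Rightarrow> (nat \<Rightarrow> real) \<Rightarrow> (nat \<Rightarrow> real)" where
  "block_flip J n B \<omega> = (\<lambda>j\<in>{..<J}. sign_of B (n j) * \<omega> j)"

definition sign_average ::
    "nat \<Rightarrow> nat \<Rightarrow> (nat \<Rightarrow> nat) \<Rightarrow> (nat \<Rightarrow> nat \<Rightarrow> real) \<Rightarrow> (nat \<Rightarrow> real) \<Rightarrow> real" where
  "sign_average N J n x \<omega> = (\<Sum>B\<in>Pow {1..N}. gauss_norm_sq J x (block_flip J n B \<omega>)) / 2 ^ N"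

lemma sign_average_nonneg: "0 \<le> sign_average N J n x \<omega>"
  unfolding sign_average_def gauss_norm_sq_def by (auto intro!: sum_nonneg divide_nonneg_nonneg)

lemma sign_average_integral:
  assumes x: "\<And>j. j < J \<Longrightarrow> x j \<in> c0"
  shows "integrable (gauss_measure J) (sign_average N J n x)"
    and "(\<integral>\<omega>. sign_average N J n x \<omega> \<partial>gauss_measure J) = gauss_sq_c0 J x"
proof -
  note norm_int = gauss_norm_sq_integrable[OF x]
  have int: "integrable (gauss_measure J) (\<lambda>\<omega>. gauss_norm_sq J x (block_flip J n B \<omega>))" for B
    unfolding block_flip_def
    by (rule sign_flip_integral(1)[where e = "\<lambda>j. sign_of B (n j)", OF abs_sign_of norm_int])
  have mean: "(\<integral>\<omega>. gauss_norm_sq J x (block_flip J n B \<omega>) \<partial>gauss_measure J) = gauss_sq_c0 J x" for B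
    using sign_flip_integral(2)[where e = "\<lambda>j. sign_of B (n j)", OF abs_sign_of norm_int]
    unfolding block_flip_def gauss_sq_c0_eq by simp
  show "integrable (gauss_measure J) (sign_average N J n x)"
    unfolding sign_average_def[abs_def] using int by (intro integrable_divide integrable_sum) auto
  show "(\<integral>\<omega>. sign_average N J n x \<omega> \<partial>gauss_measure J) = gauss_sq_c0 J x"
    unfolding sign_average_def using int by (simp add: Bochner_Integration.integral_sum mean card_Pow)
qed

text \<open>Evaluate every flipped sum at the coordinate m and let V_p = sum over block p of g_j x_j(m).
  By Rademacher averaging the mean over the sign patterns of these squared values is
  sum_p V_p^2 >= V_m^2 = Z_m^2, so each squared block sum is dominated by the sign average.\<close>

lemma block_sum_sq_le_sign_average:
  assumes n: "\<And>j. j < J \<Longrightarrow> n j \<in> {1..N}" and x: "\<And>j. j < J \<Longrightarrow> x j \<in> c0"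
    and m: "m \<in> {1..N}"
  shows "(block_sum J n x m \<omega>)\<^sup>2 \<le> sign_average N J n x \<omega>"
proof -
  define V where "V p = (\<Sum>j\<in>block J n p. x j m * \<omega> j)" for p
  have flipped: "(\<Sum>p\<in>{1..N}. sign_of B p * V p)\<^sup>2 \<le> gauss_norm_sq J x (block_flip J n B \<omega>)" for B
  proof -
    have "(\<Sum>j<J. block_flip J n B \<omega> j * x j m) = (\<Sum>j<J. sign_of B (n j) * (x j m * \<omega> j))"
      by (rule sum.cong) (auto simp: block_flip_def)
    also have "\<dots> = (\<Sum>p\<in>{1..N}. \<Sum>j\<in>block J n p. sign_of B (n j) * (x j m * \<omega> j))"
      by (rule sum_over_blocks[OF _ n]) simp
    also have "\<dots> = (\<Sum>p\<in>{1..N}. sign_of B p * V p)"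
      unfolding V_def sum_distrib_left by (intro sum.cong refl) (auto simp: block_def)
    finally show ?thesis
      using coord_sq_le_gauss_norm_sq[where J = J and x = x and \<omega> = "block_flip J n B \<omega>" and m = m] x
      by simp
  qed
  have "2 ^ N * (V m)\<^sup>2 \<le> 2 ^ N * (\<Sum>p\<in>{1..N}. (V p)\<^sup>2)"
    by (intro mult_left_mono member_le_sum) (use m in auto)
  also have "\<dots> = (\<Sum>B\<in>Pow {1..N}. (\<Sum>p\<in>{1..N}. sign_of B p * V p)\<^sup>2)"
    using sum_sign_patterns_sq[of "{1..N}" V] by simp
  also have "\<dots> \<le> (\<Sum>B\<in>Pow {1..N}. gauss_norm_sq J x (block_flip J n B \<omega>))"
    by (intro sum_mono flipped)
  finally show ?thesis unfolding sign_average_def block_sum_def V_def by (simp add: field_simps)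
qed


section \<open>Upper bound: a second moment argument over the blocks\<close>

text \<open>A centred normal variable of standard deviation sigma exceeds r sigma in absolute value with
  probability at least phi(r + 1): compare its density with its value at (r + 1) sigma on the
  interval (r sigma, (r + 1) sigma].\<close>

lemma normal_tail_prob_lower:
  assumes "prob_space M" and D: "distributed M lborel Z (normal_density 0 \<sigma>)"
    and \<sigma>: "\<sigma> > 0" and r: "r \<ge> 0"
  shows "std_normal_density (r + 1) \<le> (\<integral>\<omega>. indicator {y. r * \<sigma> < \<bar>y\<bar>} (Z \<omega>) \<partial>M)"
proof -
  define A where "A = {y::real. r * \<sigma> < \<bar>y\<bar>}"
  define I where "I = {r * \<sigma> <.. (r + 1) * \<sigma>}"
  define c where "c = normal_density 0 \<sigma> ((r + 1) * \<sigma>)"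
  have A [measurable]: "A \<in> sets borel" unfolding A_def by measurable
  have I: "r * \<sigma> \<le> (r + 1) * \<sigma>" using \<sigma> by (simp add: algebra_simps)
  have "c * \<sigma> = (\<integral>y. c * indicator I y \<partial>lborel)"
    using \<sigma> I unfolding I_def by (simp add: algebra_simps)
  also have "\<dots> \<le> (\<integral>y. normal_density 0 \<sigma> y * indicator A y \<partial>lborel)"
  proof (rule integral_mono)
    show "integrable lborel (\<lambda>y. normal_density 0 \<sigma> y * indicator A y)"
      by (rule integrable_real_mult_indicator) (auto intro: integrable_normal_density[OF \<sigma>])
    show "integrable lborel (\<lambda>y. c * indicator I y)"
      unfolding I_def by (intro integrable_mult_right integrable_real_indicator) (use I in auto)
    fix y
    show "c * indicator I y \<le> normal_density 0 \<sigma> y * indicator A y"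
    proof (cases "y \<in> I")
      case True
      then have "y \<in> A" "0 \<le> y" using r \<sigma> unfolding A_def I_def
        by (auto intro: order_trans[of 0 "r * \<sigma>"])
      moreover have "y\<^sup>2 \<le> ((r + 1) * \<sigma>)\<^sup>2" using True \<open>0 \<le> y\<close> unfolding I_def
        by (intro power_mono) auto
      then have "c \<le> normal_density 0 \<sigma> y" unfolding c_def normal_density_def
        using \<sigma> by (intro mult_left_mono) (auto simp: divide_right_mono)
      ultimately show ?thesis using True by simp
    qed simp
  qed
  also have "\<dots> = (\<integral>\<omega>. indicator A (Z \<omega>) \<partial>M)"
    by (rule distributed_integral[OF D]) auto
  finally have "c * \<sigma> \<le> (\<integral>\<omega>. indicator A (Z \<omega>) \<partial>M)" .
  moreover have "c * \<sigma> = std_normal_density (r + 1)"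
  proof -
    have "sqrt (2 * pi * \<sigma>\<^sup>2) = sqrt (2 * pi) * \<sigma>" using \<sigma> by (simp add: real_sqrt_mult)
    then show ?thesis unfolding c_def normal_density_def std_normal_density_def using \<sigma>
      by (simp add: power_mult_distrib field_simps) (simp add: power2_eq_square algebra_simps)
  qed
  ultimately show ?thesis unfolding A_def by simp
qed

definition block_exceeds ::
    "nat \<Rightarrow> (nat \<Rightarrow> nat) \<Rightarrow> (nat \<Rightarrow> nat \<Rightarrow> real) \<Rightarrow> real \<Rightarrow> nat \<Rightarrow> (nat \<Rightarrow> real) \<Rightarrow> real" where
  "block_exceeds J n x r m \<omega> = indicator {y. r * sqrt (block_var J n x m) < \<bar>y\<bar>} (block_sum J n x m \<omega>)"

lemma block_exceeds_measurable [measurable]: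
  "block_exceeds J n x r m \<in> borel_measurable (gauss_measure J)"
  unfolding block_exceeds_def[abs_def] by measurable

lemma block_exceeds_01: "block_exceeds J n x r m \<omega> = 0 \<or> block_exceeds J n x r m \<omega> = 1"
  unfolding block_exceeds_def by (auto simp: indicator_def)

lemma block_exceeds_indep:
  assumes "m \<noteq> m'"
  shows "prob_space.indep_var (gauss_measure J)
           borel (block_exceeds J n x r m) borel (block_exceeds J n x r m')"
proof -
  interpret P: prob_space "gauss_measure J" by (rule prob_space_gauss_measure)
  have "P.indep_var borel ((\<lambda>y. indicator {y. r * sqrt (block_var J n x m) < \<bar>y\<bar>} y :: real) \<circ> block_sum J n x m)
          borel ((\<lambda>y. indicator {y. r * sqrt (block_var J n x m') < \<bar>y\<bar>} y :: real) \<circ> block_sum J n x m')"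
    by (rule P.indep_var_compose[OF block_sum_indep[OF assms]]) measurable
  then show ?thesis unfolding block_exceeds_def[abs_def] comp_def by simp
qed

lemma block_exceeds_prob_lower:
  assumes "r \<ge> 0" and "block_var J n x m > 0"
  shows "std_normal_density (r + 1) \<le> (\<integral>\<omega>. block_exceeds J n x r m \<omega> \<partial>gauss_measure J)"
  unfolding block_exceeds_def
  by (rule normal_tail_prob_lower[OF prob_space_gauss_measure block_sum_normal]) (use assms in auto)

lemma block_exceeds_imp_sign_average:
  assumes n: "\<And>j. j < J \<Longrightarrow> n j \<in> {1..N}" and x: "\<And>j. j < J \<Longrightarrow> x j \<in> c0"
    and m: "m \<in> {1..N}" and t: "t \<le> block_var J n x m" and r: "r \<ge> 0"
    and exceeds: "block_exceeds J n x r m \<omega> \<noteq> 0"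
  shows "t * r\<^sup>2 \<le> sign_average N J n x \<omega>"
proof -
  have big: "r * sqrt (block_var J n x m) < \<bar>block_sum J n x m \<omega>\<bar>"
    using exceeds unfolding block_exceeds_def by (auto simp: indicator_def split: if_splits)
  have "t * r\<^sup>2 \<le> block_var J n x m * r\<^sup>2" using t by (intro mult_right_mono) auto
  also have "\<dots> = (r * sqrt (block_var J n x m))\<^sup>2"
    using block_var_nonneg by (simp add: power_mult_distrib)
  also have "\<dots> \<le> (block_sum J n x m \<omega>)\<^sup>2"
    using big r by (metis abs_ge_zero less_imp_le power2_abs power_mono mult_nonneg_nonneg real_sqrt_ge_zero
        block_var_nonneg)
  also have "\<dots> \<le> sign_average N J n x \<omega>" by (rule block_sum_sq_le_sign_average[OF n x m])
  finally show ?thesis .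
qed

text \<open>For a sum c of pairwise independent 0-1 variables with mean S,
  E c^2 <= S + S^2 (the diagonal contributes S, the off-diagonal terms factorize).\<close>

lemma indicator_sum_second_moment:
  fixes f :: "'i \<Rightarrow> 'a \<Rightarrow> real"
  assumes M: "prob_space M" and K: "finite K"
    and meas: "\<And>m. m \<in> K \<Longrightarrow> f m \<in> borel_measurable M"
    and zero_one: "\<And>m \<omega>. m \<in> K \<Longrightarrow> f m \<omega> = 0 \<or> f m \<omega> = 1"
    and indep: "\<And>m m'. m \<in> K \<Longrightarrow> m' \<in> K \<Longrightarrow> m \<noteq> m' \<Longrightarrow>
                  prob_space.indep_var M borel (f m) borel (f m')"
  shows "integrable M (\<lambda>\<omega>. (\<Sum>m\<in>K. f m \<omega>)\<^sup>2)"
    and "(\<integral>\<omega>. (\<Sum>m\<in>K. f m \<omega>)\<^sup>2 \<partial>M) \<le> (\<Sum>m\<in>K. \<integral>\<omega>. f m \<omega> \<partial>M) + (\<Sum>m\<in>K. \<integral>\<omega>. f m \<omega> \<partial>M)\<^sup>2"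
proof -
  interpret P: prob_space M by (rule M)
  define q where "q m = (\<integral>\<omega>. f m \<omega> \<partial>M)" for m
  have bounded: "\<bar>f m \<omega>\<bar> \<le> 1" if "m \<in> K" for m \<omega> using zero_one[OF that, of \<omega>] by auto
  have int: "integrable M (f m)" if "m \<in> K" for m
    using meas[OF that] bounded[OF that] by (intro P.integrable_const_bound[where B = 1]) auto
  have int2: "integrable M (\<lambda>\<omega>. f m \<omega> * f m' \<omega>)" if "m \<in> K" "m' \<in> K" for m m'
    using meas that bounded[OF that(1)] bounded[OF that(2)]
    by (intro P.integrable_const_bound[where B = 1]) (auto simp: abs_mult intro!: AE_I2 mult_le_one)
  have square: "(\<Sum>m\<in>K. f m \<omega>)\<^sup>2 = (\<Sum>m\<in>K. \<Sum>m'\<in>K. f m \<omega> * f m' \<omega>)" for \<omega>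
    unfolding power2_eq_square sum_product ..
  show "integrable M (\<lambda>\<omega>. (\<Sum>m\<in>K. f m \<omega>)\<^sup>2)"
    unfolding square using int2 by (intro Bochner_Integration.integrable_sum) auto
  have pair: "(\<integral>\<omega>. f m \<omega> * f m' \<omega> \<partial>M) \<le> (if m = m' then q m else 0) + q m * q m'"
    if "m \<in> K" "m' \<in> K" for m m'
  proof (cases "m = m'")
    case True
    have "(\<lambda>\<omega>. f m \<omega> * f m \<omega>) = f m" using zero_one[OF that(1)] by (intro ext) (metis mult_1 mult_zero_left)
    moreover have "0 \<le> q m" unfolding q_def using zero_one[OF that(1)]
      by (intro integral_nonneg_AE AE_I2) (metis order_refl zero_le_one)
    ultimately show ?thesis using True unfolding q_def by (simp add: mult_nonneg_nonneg)
  next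
    case False
    then show ?thesis unfolding q_def
      using P.indep_var_lebesgue_integral[OF indep[OF that False] int[OF that(1)] int[OF that(2)]] by simp
  qed
  have "(\<integral>\<omega>. (\<Sum>m\<in>K. f m \<omega>)\<^sup>2 \<partial>M) = (\<Sum>m\<in>K. \<Sum>m'\<in>K. \<integral>\<omega>. f m \<omega> * f m' \<omega> \<partial>M)"
    unfolding square using int2 by (simp add: Bochner_Integration.integral_sum Bochner_Integration.integrable_sum)
  also have "\<dots> \<le> (\<Sum>m\<in>K. \<Sum>m'\<in>K. (if m = m' then q m else 0) + q m * q m')"
    using pair by (intro sum_mono) auto
  also have "\<dots> = (\<Sum>m\<in>K. q m) + (\<Sum>m\<in>K. q m)\<^sup>2"
    using K by (simp add: sum.distrib power2_eq_square sum_product)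
  finally show "(\<integral>\<omega>. (\<Sum>m\<in>K. f m \<omega>)\<^sup>2 \<partial>M) \<le> (\<Sum>m\<in>K. \<integral>\<omega>. f m \<omega> \<partial>M) + (\<Sum>m\<in>K. \<integral>\<omega>. f m \<omega> \<partial>M)\<^sup>2"
    unfolding q_def .
qed

text \<open>A second moment bound: if a random variable c with E c = S >= 2 and E c^2 <= S + S^2
  is nonzero only where F >= a, then E F >= a/2.  Indeed a (2c/S - c^2/S^2) <= F pointwise.\<close>

lemma second_moment_lower_bound:
  fixes c F :: "'a \<Rightarrow> real"
  assumes M: "prob_space M"
    and c: "integrable M c" "integrable M (\<lambda>\<omega>. (c \<omega>)\<^sup>2)"
    and S: "(\<integral>\<omega>. c \<omega> \<partial>M) = S" "2 \<le> S" "(\<integral>\<omega>. (c \<omega>)\<^sup>2 \<partial>M) \<le> S + S\<^sup>2"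
    and F: "integrable M F" "\<And>\<omega>. 0 \<le> F \<omega>"
    and a: "0 \<le> a" "\<And>\<omega>. c \<omega> \<noteq> 0 \<Longrightarrow> a \<le> F \<omega>"
  shows "a / 2 \<le> (\<integral>\<omega>. F \<omega> \<partial>M)"
proof -
  interpret P: prob_space M by (rule M)
  define w where "w = 1 / S"
  have w: "w > 0" unfolding w_def using S by simp
  have pointwise: "a * (2 * w * c \<omega> - w\<^sup>2 * (c \<omega>)\<^sup>2) \<le> F \<omega>" for \<omega>
  proof (cases "c \<omega> = 0")
    case False
    have "0 \<le> (w * c \<omega> - 1)\<^sup>2" by simp
    then have "2 * w * c \<omega> - w\<^sup>2 * (c \<omega>)\<^sup>2 \<le> 1" by (simp add: power2_eq_square algebra_simps)
    then have "a * (2 * w * c \<omega> - w\<^sup>2 * (c \<omega>)\<^sup>2) \<le> a" using a(1) by (simp add: mult_left_le)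
    then show ?thesis using a(2)[OF False] by linarith
  qed (simp add: F(2))
  have "1 / 2 \<le> 1 - 1 / S" using S by (simp add: field_simps)
  also have "1 - 1 / S = 2 * w * S - w\<^sup>2 * (S + S\<^sup>2)"
    unfolding w_def using S by (simp add: field_simps power2_eq_square)
  also have "\<dots> \<le> 2 * w * S - w\<^sup>2 * (\<integral>\<omega>. (c \<omega>)\<^sup>2 \<partial>M)"
    using S(3) w by (simp add: mult_left_mono)
  finally have "a * (1 / 2) \<le> a * (2 * w * S - w\<^sup>2 * (\<integral>\<omega>. (c \<omega>)\<^sup>2 \<partial>M))"
    using a(1) by (rule mult_left_mono)
  also have "\<dots> = (\<integral>\<omega>. a * (2 * w * c \<omega> - w\<^sup>2 * (c \<omega>)\<^sup>2) \<partial>M)"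
    using c S(1) by simp
  also have "\<dots> \<le> (\<integral>\<omega>. F \<omega> \<partial>M)"
    using c F pointwise by (intro integral_mono) auto
  finally show ?thesis by simp
qed


lemma heavy_blocks_second_moment:
  assumes n: "\<And>j. j < J \<Longrightarrow> n j \<in> {1..N}" and x: "\<And>j. j < J \<Longrightarrow> x j \<in> c0"
    and r: "r \<ge> 0" and t: "t \<ge> 0"
    and K: "K \<subseteq> {1..N}" and heavy: "\<And>m. m \<in> K \<Longrightarrow> t \<le> block_var J n x m"
    and many: "2 \<le> (\<Sum>m\<in>K. \<integral>\<omega>. block_exceeds J n x r m \<omega> \<partial>gauss_measure J)"
  shows "t * r\<^sup>2 / 2 \<le> gauss_sq_c0 J x"
proof -
  interpret P: prob_space "gauss_measure J" by (rule prob_space_gauss_measure)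
  have finK: "finite K" using K finite_subset by blast
  note moments = indicator_sum_second_moment[OF prob_space_gauss_measure finK,
      of "block_exceeds J n x r", OF block_exceeds_measurable block_exceeds_01 block_exceeds_indep]
  have int: "integrable (gauss_measure J) (block_exceeds J n x r m)" for m
    by (intro P.integrable_const_bound[where B = 1]) (auto simp: block_exceeds_def indicator_def)
  have "t * r\<^sup>2 / 2 \<le> (\<integral>\<omega>. sign_average N J n x \<omega> \<partial>gauss_measure J)"
  proof (rule second_moment_lower_bound[OF prob_space_gauss_measure _ moments(1) _ many moments(2)])
    show "integrable (gauss_measure J) (\<lambda>\<omega>. \<Sum>m\<in>K. block_exceeds J n x r m \<omega>)"
      using int by (intro Bochner_Integration.integrable_sum) auto
    show "(\<integral>\<omega>. (\<Sum>m\<in>K. block_exceeds J n x r m \<omega>) \<partial>gauss_measure J)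
        = (\<Sum>m\<in>K. \<integral>\<omega>. block_exceeds J n x r m \<omega> \<partial>gauss_measure J)"
      using int by (rule Bochner_Integration.integral_sum)
    show "t * r\<^sup>2 \<le> sign_average N J n x \<omega>" if "(\<Sum>m\<in>K. block_exceeds J n x r m \<omega>) \<noteq> 0" for \<omega>
    proof -
      have "\<exists>m\<in>K. block_exceeds J n x r m \<omega> \<noteq> 0"
      proof (rule ccontr)
        assume "\<not> (\<exists>m\<in>K. block_exceeds J n x r m \<omega> \<noteq> 0)"
        then show False using that by simp
      qed
      then obtain m where "m \<in> K" "block_exceeds J n x r m \<omega> \<noteq> 0" by blast
      then show ?thesis
        using K heavy r by (intro block_exceeds_imp_sign_average[OF n x]) auto
    qed
  qed (use sign_average_integral(1)[OF x] sign_average_nonneg r t in auto)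
  then show ?thesis
    using sign_average_integral(2)[where J = J and x = x and N = N and n = n] x by simp
qed

text \<open>Consequently, if E||sum_j g_j x_j||^2 < t r^2 / 2, fewer than 2 / phi(r + 1) blocks have
  variance at least t, since each of them exceeds its level with probability >= phi(r + 1).\<close>

lemma few_heavy_blocks:
  assumes n: "\<And>j. j < J \<Longrightarrow> n j \<in> {1..N}" and x: "\<And>j. j < J \<Longrightarrow> x j \<in> c0"
    and r: "r \<ge> 0" and t: "t > 0" and small: "gauss_sq_c0 J x < t * r\<^sup>2 / 2"
  shows "real (card {m\<in>{1..N}. t \<le> block_var J n x m}) * std_normal_density (r + 1) < 2"
proof (rule ccontr)
  define K where "K = {m\<in>{1..N}. t \<le> block_var J n x m}"
  assume "\<not> ?thesis"
  then have "2 \<le> real (card K) * std_normal_density (r + 1)" unfolding K_def by simp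
  also have "\<dots> = (\<Sum>m\<in>K. std_normal_density (r + 1))" by simp
  also have "\<dots> \<le> (\<Sum>m\<in>K. \<integral>\<omega>. block_exceeds J n x r m \<omega> \<partial>gauss_measure J)"
    using t r by (intro sum_mono block_exceeds_prob_lower) (auto simp: K_def)
  finally have many: "2 \<le> (\<Sum>m\<in>K. \<integral>\<omega>. block_exceeds J n x r m \<omega> \<partial>gauss_measure J)" .
  have "t * r\<^sup>2 / 2 \<le> gauss_sq_c0 J x"
    by (rule heavy_blocks_second_moment[OF n x r _ _ _ many]) (use t in \<open>auto simp: K_def\<close>)
  with small show False by simp
qed

lemma sum_threshold_split:
  fixes a :: "'i \<Rightarrow> real"
  assumes "finite I" and "t \<ge> 0" and "\<And>i. i \<in> I \<Longrightarrow> a i \<le> M"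
  shows "(\<Sum>i\<in>I. a i) \<le> real (card I) * t + real (card {i\<in>I. t \<le> a i}) * M"
proof -
  define K where "K = {i\<in>I. t \<le> a i}"
  have split: "(\<Sum>i\<in>I. a i) = (\<Sum>i\<in>I - K. a i) + (\<Sum>i\<in>K. a i)"
    using assms(1) by (subst sum.subset_diff[of K]) (auto simp: K_def)
  have "(\<Sum>i\<in>I - K. a i) \<le> (\<Sum>i\<in>I - K. t)"
    by (rule sum_mono) (auto simp: K_def not_le intro: less_imp_le)
  also have "\<dots> = real (card (I - K)) * t" by simp
  also have "\<dots> \<le> real (card I) * t"
    using assms(1,2) by (intro mult_right_mono) (auto intro: card_mono)
  finally have light: "(\<Sum>i\<in>I - K. a i) \<le> real (card I) * t" .
  have heavy: "(\<Sum>i\<in>K. a i) \<le> real (card K) * M"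
    using sum_mono[of K a "\<lambda>_. M"] assms(3) by (auto simp: K_def)
  show ?thesis using split light heavy unfolding K_def by linarith
qed

lemma gauss_density_log_estimate:
  fixes L :: real assumes L: "L \<ge> 16"
  shows "L \<le> 4 * exp L * std_normal_density (sqrt (L / 2) + 1)"
proof -
  define r where "r = sqrt (L / 2)"
  have r2: "r\<^sup>2 = L / 2" unfolding r_def using L by simp
  have sqrtL: "4 \<le> sqrt L" using L real_sqrt_le_mono[of 16 L] by simp
  have "r \<le> sqrt L" unfolding r_def using L by (intro real_sqrt_le_mono) auto
  moreover have "ln L \<le> 2 * sqrt L - 2"
    using ln_le_minus_one[of "sqrt L"] sqrtL L by (simp add: ln_sqrt)
  moreover have "4 * sqrt L \<le> L"
    using mult_left_mono[OF sqrtL, of "sqrt L"] L by (simp add: power2_eq_square)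
  moreover have "(r + 1)\<^sup>2 / 2 = L / 4 + r + 1 / 2" using r2 by (simp add: power2_eq_square algebra_simps)
  ultimately have key: "ln L \<le> L - (r + 1)\<^sup>2 / 2" by linarith
  have "sqrt (2 * pi) \<le> 4" using real_sqrt_le_mono[of "2 * pi" 16] pi_approx by simp
  then have c: "1 \<le> 4 / sqrt (2 * pi)" by simp
  have "L = exp (ln L)" using L by simp
  also have "\<dots> \<le> exp (L - (r + 1)\<^sup>2 / 2)" using key by simp
  also have "\<dots> = exp L * exp (- (r + 1)\<^sup>2 / 2)" by (simp flip: exp_add)
  also have "\<dots> \<le> (4 / sqrt (2 * pi)) * (exp L * exp (- (r + 1)\<^sup>2 / 2))"
    using mult_right_mono[OF c, of "exp L * exp (- (r + 1)\<^sup>2 / 2)"] by simp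
  also have "\<dots> = 4 * exp L * std_normal_density (r + 1)"
    unfolding std_normal_density_def by simp
  finally show ?thesis unfolding r_def .
qed

text \<open>The key estimate for log N > 16, with t = 8M / log N and r = sqrt (log N / 2), where
  M = E||sum_j g_j x_j||^2: light blocks contribute at most N t = 8NM / log N and the fewer than
  2 / phi(r + 1) <= 8N / log N heavy blocks at most M each.\<close>

lemma coord_sq_sum_bound_large:
  assumes N: "ln (real N) > 16"
    and n: "\<And>j. j < J \<Longrightarrow> n j \<in> {1..N}" and x: "\<And>j. j < J \<Longrightarrow> x j \<in> c0"
  shows "(\<Sum>j<J. (x j (n j))\<^sup>2) \<le> 16 * real N / ln (real N) * gauss_sq_c0 J x"
proof -
  define M where "M = gauss_sq_c0 J x"
  define L where "L = ln (real N)"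
  define r where "r = sqrt (L / 2)"
  define t where "t = 8 * M / L"
  define \<phi> where "\<phi> = std_normal_density (r + 1)"
  have "0 < real N" using N by (cases N) auto
  then have L: "L > 16" "real N = exp L" using N unfolding L_def by auto
  have M: "M \<ge> 0" unfolding M_def by (rule gauss_sq_c0_nonneg)
  have \<phi>: "\<phi> > 0" unfolding \<phi>_def by (rule std_normal_density_pos)
  have var_le: "block_var J n x m \<le> M" for m unfolding M_def by (rule block_var_le_gauss_sq_c0[OF x])
  have "(\<Sum>j<J. (x j (n j))\<^sup>2) = (\<Sum>m\<in>{1..N}. block_var J n x m)" by (rule sum_block_var[OF n])
  also have "\<dots> \<le> 16 * real N / L * M"
  proof (cases "M = 0")
    case True
    then show ?thesis using var_le by (simp add: sum_nonpos)
  next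
    case False
    then have t: "t > 0" unfolding t_def using M L by simp
    have "real (card {m\<in>{1..N}. t \<le> block_var J n x m}) * \<phi> < 2"
      unfolding \<phi>_def using False M L
      by (intro few_heavy_blocks[OF n x]) (auto simp: r_def t_def M_def)
    then have "real (card {m\<in>{1..N}. t \<le> block_var J n x m}) < 2 / \<phi>"
      using \<phi> by (simp add: field_simps)
    also have "2 / \<phi> \<le> 8 * real N / L"
      using gauss_density_log_estimate[of L] L \<phi> unfolding \<phi>_def r_def by (simp add: field_simps)
    finally have "real (card {m\<in>{1..N}. t \<le> block_var J n x m}) \<le> 8 * real N / L" by simp
    then have heavy: "real (card {m\<in>{1..N}. t \<le> block_var J n x m}) * M \<le> 8 * real N / L * M"
      using M by (rule mult_right_mono)
    have "(\<Sum>m\<in>{1..N}. block_var J n x m)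
        \<le> real (card {1..N}) * t + real (card {m\<in>{1..N}. t \<le> block_var J n x m}) * M"
      using t var_le by (intro sum_threshold_split) auto
    also have "\<dots> \<le> 8 * real N / L * M + 8 * real N / L * M"
      using heavy unfolding t_def by (intro add_mono) (auto simp: mult_ac)
    finally show ?thesis by (simp add: mult_ac)
  qed
  finally show ?thesis unfolding M_def L_def .
qed


text \<open>For small N the trivial bound sum_j x_j(n_j)^2 <= N E||sum_j g_j x_j||^2 (each of the N
  coordinates contributes at most the mean squared norm) already suffices.\<close>

lemma coord_sq_sum_bound_trivial:
  assumes n: "\<And>j. j < J \<Longrightarrow> n j \<in> {1..N}" and x: "\<And>j. j < J \<Longrightarrow> x j \<in> c0"
  shows "(\<Sum>j<J. (x j (n j))\<^sup>2) \<le> real N * gauss_sq_c0 J x"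
proof -
  have "(\<Sum>j<J. (x j (n j))\<^sup>2) = (\<Sum>m\<in>{1..N}. block_var J n x m)" by (rule sum_block_var[OF n])
  also have "\<dots> \<le> (\<Sum>m\<in>{1..N}. gauss_sq_c0 J x)"
    by (intro sum_mono block_var_le_gauss_sq_c0[OF x])
  finally show ?thesis by simp
qed

lemma coord_sq_sum_bound:
  assumes N: "N \<ge> 2"
    and n: "\<And>j. j < J \<Longrightarrow> n j \<in> {1..N}" and x: "\<And>j. j < J \<Longrightarrow> x j \<in> c0"
  shows "(\<Sum>j<J. (x j (n j))\<^sup>2) \<le> 16 * real N / ln (real N) * gauss_sq_c0 J x"
proof (cases "ln (real N) > 16")
  case True
  then show ?thesis by (rule coord_sq_sum_bound_large[OF _ n x])
next
  case False
  have "0 < ln (real N)" using N by simp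
  moreover have "real N * ln (real N) \<le> real N * 16" using False by (intro mult_left_mono) auto
  ultimately have "real N \<le> 16 * real N / ln (real N)" by (simp add: field_simps)
  then have "real N * gauss_sq_c0 J x \<le> 16 * real N / ln (real N) * gauss_sq_c0 J x"
    using gauss_sq_c0_nonneg by (rule mult_right_mono)
  moreover have "(\<Sum>j<J. (x j (n j))\<^sup>2) \<le> real N * gauss_sq_c0 J x"
    by (rule coord_sq_sum_bound_trivial[OF n x])
  ultimately show ?thesis by linarith
qed

lemma gamma_admissible_coord_upper:
  assumes N: "N \<ge> 2"
  shows "gamma_admissible (coord ` {1..N}) (4 * sqrt (real N / ln (real N)))"
proof (rule gamma_admissible_coordI)
  have "0 < ln (real N)" using N by simp
  then show "0 \<le> 4 * sqrt (real N / ln (real N))" by simp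
  have "(4 * sqrt (real N / ln (real N)))\<^sup>2 = 16 * real N / ln (real N)"
    using \<open>0 < ln (real N)\<close> by (simp add: power_mult_distrib)
  then show "(\<Sum>j<J. (x j (n j))\<^sup>2) \<le> (4 * sqrt (real N / ln (real N)))\<^sup>2 * gauss_sq_c0 J x"
    if "\<And>j. j < J \<Longrightarrow> n j \<in> {1..N}" "\<And>j. j < J \<Longrightarrow> x j \<in> c0" for J n x
    using coord_sq_sum_bound[OF N that] by simp
qed

theorem mainTheorem8:
  fixes N :: nat
  assumes "N \<ge> 2"
  shows "sqrt (real N / (2 * ln (2 * real N))) \<le> gamma_bound (coord ` {1..N})
       \<and> gamma_bound (coord ` {1..N}) \<le> 4 * sqrt (real N / ln (real N))"
proof -
  let ?A = "{C. gamma_admissible (coord ` {1..N}) C}"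
  have upper: "4 * sqrt (real N / ln (real N)) \<in> ?A"
    using gamma_admissible_coord_upper[OF assms] by simp
  have lower: "sqrt (real N / (2 * ln (2 * real N))) \<le> C" if "C \<in> ?A" for C
    using gamma_admissible_coord_lower[OF assms] that by simp
  have "sqrt (real N / (2 * ln (2 * real N))) \<le> Inf ?A"
    using upper lower by (intro cInf_greatest) auto
  moreover have "Inf ?A \<le> 4 * sqrt (real N / ln (real N))"
    using upper lower by (intro cInf_lower bdd_belowI) auto
  ultimately show ?thesis unfolding gamma_bound_eq by simp
qed

end
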